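(* Fix an integer $q\ge2$, $c\in\mathbb{R}$ and $\lambda\in(-1/q-c,-c)$ such that $f_c$ satisfies the pre-$q$-Sturmian condition for $\lambda$, with Lipschitz function $\psi$ and constant $\beta$; regard $\psi$ as a $1$-periodic function on $\mathbb{R}$. Let $\theta=\lambda+1/q+c\in(0,1/q)$ and $f=f_0$. Then: (i) For any $\lambda+q^{-1}\le x<y\le\lambda+1$: $\psi(y)-\psi(x)\le f\left(q^{-1}-\theta-\frac{y-x}{q-1}\right)-f(q^{-1}-\theta)\le f(0)-f(q^{-1}-\theta)$. (i)' For any $\lambda+q^{-1}-1\le y<x\le\lambda$: $\psi(y)-\psi(x)\le f\left(\theta-\frac{x-y}{q-1}\right)-f(\theta)\le f(0)-f(\theta)$. (ii) For any $x<y$ with $y-x<1$: $\psi(y)-\psi(x)\le f\left(q^{-1}-\theta-\frac{y-x}{q}\right)-f(q^{-1}-\theta)-f'(q^{-1}-\theta)\frac{y-x}{q(q-1)}\le -f'(q^{-1}-\theta)\frac{y-x}{q-1}$. (ii)' For any $y<x$ with $x-y<1$: $\psi(y)-\psi(x)\le f\left(\theta-\frac{x-y}{q}\right)-f(\theta)-f'(\theta)\frac{x-y}{q(q-1)}\le -f'(\theta)\frac{x-y}{q-1}$.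
   Context: $\mathbb{T}=\mathbb{R}/\mathbb{Z}$, $T(x)=qx\bmod1$. $f_0(x)=\log\left|\frac{\sin\pi qx}{\sin\pi x}\right|$ (value $\log q$ at integers), a $1$-periodic even function, real-analytic and strictly concave on $(-1/q,1/q)$ with maximum at $0$; $f_c(x)=f_0(x+c)$. $C_\lambda=[\lambda,\lambda+1/q]\bmod1$. The function $f_c$ satisfies the pre-$q$-Sturmian condition for $\lambda$ if $f_c$ is Lipschitz on $C_\lambda$ and there exist a Lipschitz $\psi:\mathbb{T}\to\mathbb{R}$ and $\beta\in\mathbb{R}$ with $f_c(x)+\psi(x)-\psi(Tx)=\beta$ for all $x\in C_\lambda$. *)

theory Defs
  imports "HOL-Analysis.Analysis"
begin

text \<open>Functions on the circle R/Z are represented as 1-periodic functions on R.\<close>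

definition f0 :: "nat \<Rightarrow> real \<Rightarrow> real" where
  "f0 q x = (if x \<in> \<int> then ln (real q)
             else ln \<bar>sin (pi * real q * x) / sin (pi * x)\<bar>)"

definition fc :: "nat \<Rightarrow> real \<Rightarrow> real \<Rightarrow> real" where
  "fc q c x = f0 q (x + c)"

definition Tmap :: "nat \<Rightarrow> real \<Rightarrow> real" where
  "Tmap q x = frac (real q * x)"

definition Carc :: "nat \<Rightarrow> real \<Rightarrow> real set" where
  "Carc q lam = {x. \<exists>k::int. x - of_int k \<in> {lam .. lam + 1 / real q}}"

text \<open>Lipschitz continuity of f_c on the
  arc C_lambda (of length 1/q <= 1/2, so circle distance = real distance) is
  stated on the real interval [lambda, lambda+1/q].\<close>
definition pre_sturmian_with ::
    "nat \<Rightarrow> real \<Rightarrow> real \<Rightarrow> (real \<Rightarrow> real) \<Rightarrow> real \<Rightarrow> bool" where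
  "pre_sturmian_with q c lam \<psi> \<beta> \<longleftrightarrow>
     (\<exists>L. L-lipschitz_on {lam .. lam + 1 / real q} (fc q c)) \<and>
     (\<forall>x. \<psi> (x + 1) = \<psi> x) \<and>
     (\<exists>L. L-lipschitz_on UNIV \<psi>) \<and>
     (\<forall>x\<in>Carc q lam. fc q c x + \<psi> x - \<psi> (Tmap q x) = \<beta>)"

end

theory Submission
  imports Defs
begin

(* On C_lambda the pre-Sturmian condition says psi w = psi (sigma w) + g (sigma w) - beta, where
   g = f_c and sigma is the inverse branch of T with values in C_lambda.  Iterating it, psi y - psi x
   is the sum of the increments of g over the iterated pullbacks of [x, y] (the level-n pullbacks have
   total length (y - x) / q^n), up to a Lipschitz remainder that tends to 0.  Since f_0 is concave on
   (-1/q, 1/q), g is concave on C_lambda, and by the bathtub principle its increments over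
   non-overlapping intervals of total length S are at most g (lambda + S) - g lambda.  For x, y in the
   complementary arc the pullbacks of all levels are pairwise non-overlapping, which gives (i) with
   S = (y - x) / (q - 1).  In general only the first level is; bounding the higher levels by the slope
   g' lambda gives (ii).  The reflection x |-> -x maps the problem to one of the same kind with lambda
   replaced by -lambda - 1/q and exchanges the two ends of C_lambda, so (i)' and (ii)' follow from (i)
   and (ii). *)

section \<open>The kernel f0\<close>

text \<open>\<open>sin_ratio q t = sin (q t) / sin t\<close>, written as a cosine sum so that it is smooth and even,
  with value \<open>q\<close> at \<open>t = 0\<close>.\<close>

definition sin_ratio :: "nat \<Rightarrow> real \<Rightarrow> real" where
  "sin_ratio q t = (\<Sum>k<q. cos ((real q - 1 - 2 * real k) * t))"

definition sin_ratio' :: "nat \<Rightarrow> real \<Rightarrow> real" where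
  "sin_ratio' q t = - (\<Sum>k<q. (real q - 1 - 2 * real k) * sin ((real q - 1 - 2 * real k) * t))"

lemma sin_mult_eq_sin_ratio: "sin (real q * t) = sin t * sin_ratio q t"
proof -
  define F where "F k = sin ((real q - 2 * real k) * t)" for k
  have step: "2 * sin t * cos ((real q - 1 - 2 * real k) * t) = F k - F (Suc k)" for k
  proof -
    define m where "m = (real q - 1 - 2 * real k) * t"
    have "(real q - 2 * real k) * t = m + t" "(real q - 2 * real (Suc k)) * t = m - t"
      by (simp_all add: m_def algebra_simps)
    then show ?thesis by (simp add: F_def m_def[symmetric] sin_add sin_diff)
  qed
  have "2 * (sin t * sin_ratio q t) = (\<Sum>k<q. F k - F (Suc k))"
    unfolding sin_ratio_def sum_distrib_left step[symmetric] by (simp add: mult.assoc)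
  also have "\<dots> = 2 * sin (real q * t)"
    by (subst sum_lessThan_telescope') (simp add: F_def)
  finally show ?thesis by simp
qed

lemma has_real_derivative_sin_ratio: "(sin_ratio q has_real_derivative sin_ratio' q t) (at t)"
  unfolding sin_ratio_def[abs_def] sin_ratio'_def
  by (auto intro!: derivative_eq_intros simp: sum_negf mult.commute)

lemma sin_ratio_minus: "sin_ratio q (- t) = sin_ratio q t" "sin_ratio' q (- t) = - sin_ratio' q t"
  by (simp_all add: sin_ratio_def sin_ratio'_def sum_negf)

lemma sin_ratio_0: "sin_ratio q 0 = real q" "sin_ratio' q 0 = 0"
  by (simp_all add: sin_ratio_def sin_ratio'_def)

lemma abs_sin_ratio_le: "\<bar>sin_ratio q t\<bar> \<le> real q"
proof -
  have "\<bar>sin_ratio q t\<bar> \<le> (\<Sum>k<q. \<bar>cos ((real q - 1 - 2 * real k) * t)\<bar>)"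
    unfolding sin_ratio_def by (rule sum_abs)
  also have "\<dots> \<le> (\<Sum>k<q. 1)" by (intro sum_mono) simp
  finally show ?thesis by simp
qed

lemma sin_pos_below_inverse:
  assumes "q \<ge> 1" "0 < x" "x < 1 / real q"
  shows "sin (pi * x) > 0" "sin (pi * real q * x) > 0"
proof -
  have "1 / real q \<le> 1" using assms(1) by simp
  then have "x < 1" using assms(3) by linarith
  moreover have "real q * x < 1" using assms by (simp add: field_simps)
  ultimately show "sin (pi * x) > 0" "sin (pi * real q * x) > 0"
    using assms by (auto intro!: sin_gt_zero)
qed

lemma sin_ratio_pos:
  assumes "q \<ge> 1" "\<bar>x\<bar> < 1 / real q"
  shows "sin_ratio q (pi * x) > 0"
proof -
  have pos: "sin_ratio q (pi * y) > 0" if "0 < y" "y < 1 / real q" for y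
    using sin_mult_eq_sin_ratio[of q "pi * y"] sin_pos_below_inverse[OF assms(1) that]
    by (simp add: algebra_simps zero_less_mult_iff)
  show ?thesis
    using pos[of x] pos[of "- x"] assms sin_ratio_minus(1)[of q "pi * x"]
    by (cases x "0 :: real" rule: linorder_cases) (simp_all add: sin_ratio_0 assms(1))
qed

lemma f0_eq_ln_sin_ratio:
  assumes "q \<ge> 1" "\<bar>x\<bar> < 1 / real q"
  shows "f0 q x = ln (sin_ratio q (pi * x))"
proof (cases "x \<in> \<int>")
  case True
  have "1 / real q \<le> 1" using assms(1) by simp
  then have "\<bar>x\<bar> < 1" using assms(2) by linarith
  with True have "x = 0" by (auto elim!: Ints_cases)
  then show ?thesis by (simp add: f0_def sin_ratio_0)
next
  case False
  then have "sin (pi * x) \<noteq> 0" by (auto simp: sin_zero_iff_int2)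
  then show ?thesis
    using False sin_mult_eq_sin_ratio[of q "pi * x"] sin_ratio_pos[OF assms]
    by (simp add: f0_def algebra_simps)
qed

definition df0 :: "nat \<Rightarrow> real \<Rightarrow> real" where
  "df0 q x = pi * sin_ratio' q (pi * x) / sin_ratio q (pi * x)"

lemma has_real_derivative_f0:
  assumes "q \<ge> 1" "\<bar>x\<bar> < 1 / real q"
  shows "(f0 q has_real_derivative df0 q x) (at x)"
proof -
  have "((\<lambda>x. ln (sin_ratio q (pi * x))) has_real_derivative df0 q x) (at x)"
    using sin_ratio_pos[OF assms] unfolding df0_def
    by (auto intro!: derivative_eq_intros DERIV_chain2[OF has_real_derivative_sin_ratio])
  then show ?thesis
    by (rule has_field_derivative_transform_within_open[where S = "{-1 / real q<..<1 / real q}"])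
       (use assms f0_eq_ln_sin_ratio[OF assms(1)] in auto)
qed

lemma continuous_on_df0:
  assumes "q \<ge> 1"
  shows "continuous_on {-1 / real q<..<1 / real q} (df0 q)"
proof -
  have "continuous_on A (\<lambda>x. sin_ratio q (pi * x))" "continuous_on A (\<lambda>x. sin_ratio' q (pi * x))"
    for A unfolding sin_ratio_def sin_ratio'_def by (auto intro!: continuous_intros)
  moreover have "sin_ratio q (pi * x) \<noteq> 0" if "x \<in> {-1 / real q<..<1 / real q}" for x
    using sin_ratio_pos[OF assms, of x] that by (auto simp: abs_less_iff)
  ultimately show ?thesis
    unfolding df0_def by (intro continuous_intros) auto
qed

lemma f0_minus: "f0 q (- x) = f0 q x"
  by (simp add: f0_def)

lemma df0_minus: "df0 q (- x) = - df0 q x"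
  by (simp add: df0_def sin_ratio_minus[of q "pi * x", simplified])

lemma df0_0: "df0 q 0 = 0"
  by (simp add: df0_def sin_ratio_0)

lemma has_real_derivative_ln_sin_quotient:
  assumes "sin (pi * x) > 0" "sin (pi * real q * x) > 0"
  shows "((\<lambda>y. ln (sin (pi * real q * y)) - ln (sin (pi * y))) has_real_derivative
      pi * real q * cot (pi * real q * x) - pi * cot (pi * x)) (at x)"
  by (rule derivative_eq_intros refl | simp add: assms)+ (simp add: cot_def field_simps)

lemma df0_eq_cot:
  assumes "q \<ge> 1" "0 < x" "x < 1 / real q"
  shows "df0 q x = pi * real q * cot (pi * real q * x) - pi * cot (pi * x)"
proof -
  note sin_pos = sin_pos_below_inverse[OF assms(1)]
  have "ln (sin (pi * real q * y)) - ln (sin (pi * y)) = f0 q y" if "y \<in> {0<..<1 / real q}" for y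
  proof -
    have y: "\<bar>y\<bar> < 1 / real q" using that by auto
    have "sin (pi * real q * y) = sin (pi * y) * sin_ratio q (pi * y)"
      using sin_mult_eq_sin_ratio[of q "pi * y"] by (simp add: mult.assoc mult.left_commute)
    then show ?thesis
      using f0_eq_ln_sin_ratio[OF assms(1) y] sin_ratio_pos[OF assms(1) y] sin_pos(1)[of y] that
      by (simp add: ln_mult)
  qed
  then have "(f0 q has_real_derivative pi * real q * cot (pi * real q * x) - pi * cot (pi * x)) (at x)"
    using assms(2,3)
    by (intro has_field_derivative_transform_within_open[OF
          has_real_derivative_ln_sin_quotient[OF sin_pos[OF assms(2,3)]], of "{0<..<1 / real q}"]) auto
  moreover have "\<bar>x\<bar> < 1 / real q" using assms by simp
  ultimately show ?thesis using DERIV_unique has_real_derivative_f0[OF assms(1)] by metis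
qed

lemma df0_antimono_nonneg:
  assumes "q \<ge> 1" "0 \<le> s" "s \<le> t" "t < 1 / real q"
  shows "df0 q t \<le> df0 q s"
proof (rule DERIV_nonpos_imp_decreasing_open[OF assms(3)])
  fix x assume x: "s < x" "x < t"
  then have x': "0 < x" "x < 1 / real q" using assms by auto
  note sin_pos = sin_pos_below_inverse[OF assms(1) x']
  have "((\<lambda>y. pi * real q * cot (pi * real q * y) - pi * cot (pi * y)) has_real_derivative
      pi ^ 2 * (1 / sin (pi * x) ^ 2 - (real q) ^ 2 / sin (pi * real q * x) ^ 2)) (at x)"
    using sin_pos
    by (auto intro!: derivative_eq_intros DERIV_chain2[OF DERIV_cot] simp: field_simps power2_eq_square)
  then have deriv: "(df0 q has_real_derivative
      pi ^ 2 * (1 / sin (pi * x) ^ 2 - (real q) ^ 2 / sin (pi * real q * x) ^ 2)) (at x)"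
    by (rule has_field_derivative_transform_within_open[where S = "{0<..<1 / real q}"])
       (use x' df0_eq_cot[OF assms(1)] in auto)
  have "sin (pi * real q * x) = sin (pi * x) * sin_ratio q (pi * x)"
    using sin_mult_eq_sin_ratio[of q "pi * x"] by (simp add: mult.assoc mult.left_commute)
  also have "\<dots> \<le> sin (pi * x) * real q"
    using abs_sin_ratio_le[of q "pi * x"] sin_pos(1) by (intro mult_left_mono) auto
  finally have "sin (pi * real q * x) ^ 2 \<le> (real q * sin (pi * x)) ^ 2"
    using sin_pos by (intro power_mono) (auto simp: mult.commute)
  then have "(real q) ^ 2 / (real q * sin (pi * x)) ^ 2 \<le> (real q) ^ 2 / sin (pi * real q * x) ^ 2"
    using sin_pos assms(1) by (intro divide_left_mono) auto
  then have "1 / sin (pi * x) ^ 2 \<le> (real q) ^ 2 / sin (pi * real q * x) ^ 2"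
    using assms(1) by (simp add: power_mult_distrib)
  then show "\<exists>y. (df0 q has_real_derivative y) (at x) \<and> y \<le> 0"
    using deriv by (intro exI[of _ "pi ^ 2 * (1 / sin (pi * x) ^ 2 - (real q) ^ 2 / sin (pi * real q * x) ^ 2)"])
      (simp add: mult_nonneg_nonpos)
next
  show "continuous_on {s..t} (df0 q)"
    by (rule continuous_on_subset[OF continuous_on_df0[OF assms(1)]])
       (use assms in \<open>auto simp: less_le_trans[of _ 0]\<close>)
qed

lemma df0_antimono:
  assumes "q \<ge> 1" "-1 / real q < s" "s \<le> t" "t < 1 / real q"
  shows "df0 q t \<le> df0 q s"
proof -
  have mirror: "df0 q (- a) \<le> df0 q (- b)" if "0 \<le> a" "a \<le> b" "b < 1 / real q" for a b
    using df0_antimono_nonneg[OF assms(1) that] by (simp add: df0_minus)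
  consider "0 \<le> s" | "t \<le> 0" | "s < 0" "0 < t" by linarith
  then show ?thesis
  proof cases
    case 1 then show ?thesis using df0_antimono_nonneg[OF assms(1)] assms by blast
  next
    case 2 then show ?thesis using mirror[of "- t" "- s"] assms by simp
  next
    case 3 then show ?thesis
      using mirror[of 0 "- s"] df0_antimono_nonneg[OF assms(1), of 0 t] assms by (simp add: df0_0)
  qed
qed

lemma concave_f0: "q \<ge> 1 \<Longrightarrow> convex_on {-1 / real q<..<1 / real q} (\<lambda>x. - f0 q x)"
  by (rule convex_on_realI[where f' = "\<lambda>x. - df0 q x"])
     (auto intro!: derivative_eq_intros has_real_derivative_f0 df0_antimono)

lemma f0_le_tangent:
  assumes "q \<ge> 1" "\<bar>z\<bar> < 1 / real q" "\<bar>w\<bar> < 1 / real q"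
  shows "f0 q z \<le> f0 q w + df0 q w * (z - w)"
proof -
  have "(f0 q has_real_derivative df0 q w) (at w within {-1 / real q<..<1 / real q})"
    using has_real_derivative_f0[OF assms(1,3)] by (rule has_field_derivative_at_within)
  then have "((\<lambda>x. - f0 q x) has_real_derivative - df0 q w) (at w within {-1 / real q<..<1 / real q})"
    by (rule DERIV_minus)
  then have "- df0 q w * (z - w) \<le> - f0 q z - - f0 q w"
    using assms by (intro convex_on_imp_above_tangent[OF concave_f0[OF assms(1)]]) (auto simp: abs_less_iff)
  then show ?thesis by simp
qed

lemma f0_le_f0_0: "q \<ge> 1 \<Longrightarrow> \<bar>z\<bar> < 1 / real q \<Longrightarrow> f0 q z \<le> f0 q 0"
  using f0_le_tangent[of q z 0] by (simp add: df0_0)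

section \<open>Increments over lists of intervals\<close>

definition increments :: "(real \<Rightarrow> real) \<Rightarrow> (real \<times> real) list \<Rightarrow> real" where
  "increments F P = sum_list (map (\<lambda>(u, v). F v - F u) P)"

abbreviation total_length :: "(real \<times> real) list \<Rightarrow> real" where
  "total_length \<equiv> increments (\<lambda>t. t)"

definition cover_count :: "(real \<times> real) list \<Rightarrow> real \<Rightarrow> real" where
  "cover_count P t = sum_list (map (\<lambda>(u, v). indicator {u<..<v} t) P)"

lemma increments_Nil [simp]: "increments F [] = 0"
  and increments_Cons [simp]: "increments F ((u, v) # P) = F v - F u + increments F P"
  by (simp_all add: increments_def)

lemma increments_append: "increments F (P @ Q) = increments F P + increments F Q"
  by (simp add: increments_def)

lemma increments_concat_map: "increments F (concat (map f L)) = sum_list (map (\<lambda>p. increments F (f p)) L)"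
  by (induction L) (simp_all add: increments_append)

lemma sum_list_upt_eq_sum: "sum_list (map f [0..<N]) = (\<Sum>n<N. f n)"
  by (simp add: sum_set_upt_conv_sum_list_nat[symmetric] atLeast0LessThan)

lemma increments_divide: "increments (\<lambda>t. F t / c) P = increments F P / c"
  by (induction P) (auto simp: diff_divide_distrib add_divide_distrib)

lemma increments_cmult: "increments (\<lambda>t. c * F t) P = c * increments F P"
  by (induction P) (auto simp: algebra_simps)

lemma increments_mono:
  assumes "\<And>u v. (u, v) \<in> set P \<Longrightarrow> F v - F u \<le> G v - G u"
  shows "increments F P \<le> increments G P"
  unfolding increments_def using assms by (intro sum_list_mono) auto

lemma abs_increments_le:
  assumes "L-lipschitz_on UNIV F" "\<And>u v. (u, v) \<in> set P \<Longrightarrow> u \<le> v"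
  shows "\<bar>increments F P\<bar> \<le> L * total_length P"
  using assms(2)
proof (induction P)
  case (Cons p P)
  obtain u v where [simp]: "p = (u, v)" by fastforce
  have "\<bar>F v - F u\<bar> \<le> L * (v - u)"
    using lipschitz_onD[OF assms(1), of v u] Cons.prems[of u v] by (simp add: dist_real_def)
  with Cons show ?case by (simp add: algebra_simps abs_triangle_ineq[THEN order_trans])
qed simp

lemma cover_count_nonneg: "cover_count P t \<ge> 0"
  unfolding cover_count_def by (induction P) auto

lemma cover_count_append: "cover_count (P @ Q) t = cover_count P t + cover_count Q t"
  by (simp add: cover_count_def)

lemma cover_count_nonzero_imp:
  assumes "cover_count P t \<noteq> 0"
  obtains u v where "(u, v) \<in> set P" "u < t" "t < v"
proof -
  have "\<exists>(u, v) \<in> set P. indicator {u<..<v} t \<noteq> (0 :: real)"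
    using assms unfolding cover_count_def by (induction P) auto
  then show ?thesis using that by (auto simp: indicator_def split: if_splits)
qed

lemma has_integral_cover_count:
  fixes h H :: "real \<Rightarrow> real"
  assumes "\<And>u v. (u, v) \<in> set P \<Longrightarrow> \<alpha> \<le> u \<and> u \<le> v \<and> v \<le> \<beta>"
    and "\<And>u v. (u, v) \<in> set P \<Longrightarrow> (h has_integral H v - H u) {u..v}"
  shows "((\<lambda>t. cover_count P t * h t) has_integral increments H P) {\<alpha>..\<beta>}"
  using assms
proof (induction P)
  case Nil
  then show ?case by (simp add: cover_count_def)
next
  case (Cons p P)
  obtain u v where p: "p = (u, v)" by fastforce
  have "(h has_integral H v - H u) {u<..<v}"
    using Cons.prems(2)[of u v] p has_integral_Icc_iff_Ioo by auto
  moreover have "{u<..<v} \<inter> {\<alpha>..\<beta>} = {u<..<v}" using Cons.prems(1)[of u v] p by auto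
  ultimately have "((\<lambda>t. if t \<in> {u<..<v} then h t else 0) has_integral H v - H u) {\<alpha>..\<beta>}"
    by (simp only: has_integral_restrict_Int)
  moreover have "((\<lambda>t. cover_count P t * h t) has_integral increments H P) {\<alpha>..\<beta>}"
    by (rule Cons.IH) (use Cons.prems in auto)
  ultimately have "((\<lambda>t. (if t \<in> {u<..<v} then h t else 0) + cover_count P t * h t)
      has_integral (H v - H u + increments H P)) {\<alpha>..\<beta>}"
    by (rule has_integral_add)
  moreover have "cover_count (p # P) t * h t = (if t \<in> {u<..<v} then h t else 0) + cover_count P t * h t"
    for t by (simp add: p cover_count_def distrib_right)
  ultimately show ?case by (simp only: p increments_Cons)
qed

lemma bathtub_principle:
  fixes X h :: "real \<Rightarrow> real"
  assumes X: "(X has_integral S) {\<alpha>..\<beta>}" and Xh: "((\<lambda>t. X t * h t) has_integral I) {\<alpha>..\<beta>}"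
    and X_bounds: "\<And>t. t \<in> {\<alpha>..\<beta>} \<Longrightarrow> 0 \<le> X t \<and> X t \<le> 1"
    and S: "0 \<le> S" "\<alpha> + S \<le> \<beta>"
    and h: "(h has_integral J) {\<alpha>..\<alpha> + S}"
    and h_antimono: "\<And>s t. \<alpha> \<le> s \<Longrightarrow> s \<le> t \<Longrightarrow> t \<le> \<beta> \<Longrightarrow> h t \<le> h s"
  shows "I \<le> J"
proof -
  define c where "c = h (\<alpha> + S)"
  define E where "E t = (if t \<in> {\<alpha>..\<alpha> + S} then 1 else 0 :: real)" for t
  have seg: "{\<alpha>..\<alpha> + S} \<inter> {\<alpha>..\<beta>} = {\<alpha>..\<alpha> + S}" using S by auto
  have "((\<lambda>t. if t \<in> {\<alpha>..\<alpha> + S} then h t else 0) has_integral J) {\<alpha>..\<beta>}"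
    using h by (simp only: has_integral_restrict_Int seg)
  then have Eh: "((\<lambda>t. E t * h t) has_integral J) {\<alpha>..\<beta>}"
    by (rule has_integral_eq[rotated]) (simp add: E_def)
  have "((\<lambda>t. if t \<in> {\<alpha>..\<alpha> + S} then 1 else 0 :: real) has_integral S) {\<alpha>..\<beta>}"
    using has_integral_const_real[of "1 :: real" \<alpha> "\<alpha> + S"] S by (simp only: has_integral_restrict_Int seg) simp
  then have E: "(E has_integral S) {\<alpha>..\<beta>}" by (simp add: E_def[abs_def])
  have "(X t - E t) * (h t - c) \<le> 0" if t: "t \<in> {\<alpha>..\<beta>}" for t
  proof (cases "t \<le> \<alpha> + S")
    case True
    then have "c \<le> h t" using h_antimono[of t "\<alpha> + S"] t S unfolding c_def by auto
    then show ?thesis using X_bounds[OF t] True t by (simp add: E_def mult_nonpos_nonneg)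
  next
    case False
    then have "h t \<le> c" using h_antimono[of "\<alpha> + S" t] t S unfolding c_def by auto
    then show ?thesis using X_bounds[OF t] False t by (simp add: E_def mult_nonneg_nonpos)
  qed
  then have "I - J \<le> c * S - c * S"
    by (intro has_integral_le[OF has_integral_diff[OF Xh Eh]
          has_integral_diff[OF has_integral_mult_right[OF X] has_integral_mult_right[OF E]]])
       (simp add: algebra_simps)
  then show ?thesis by simp
qed

lemma increments_le_initial_segment:
  fixes g g' :: "real \<Rightarrow> real"
  assumes deriv: "\<And>t. t \<in> {\<alpha>..\<beta>} \<Longrightarrow> (g has_real_derivative g' t) (at t within {\<alpha>..\<beta>})"
    and antimono: "\<And>s t. \<alpha> \<le> s \<Longrightarrow> s \<le> t \<Longrightarrow> t \<le> \<beta> \<Longrightarrow> g' t \<le> g' s"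
    and P: "\<And>u v. (u, v) \<in> set P \<Longrightarrow> \<alpha> \<le> u \<and> u \<le> v \<and> v \<le> \<beta>"
    and count: "\<And>t. t \<in> {\<alpha>..\<beta>} \<Longrightarrow> cover_count P t \<le> 1"
    and fits: "\<alpha> + total_length P \<le> \<beta>"
  shows "increments g P \<le> g (\<alpha> + total_length P) - g \<alpha>"
proof -
  have ftc: "(g' has_integral g v - g u) {u..v}" if "\<alpha> \<le> u" "u \<le> v" "v \<le> \<beta>" for u v
    using that
    by (intro fundamental_theorem_of_calculus)
       (auto simp: has_real_derivative_iff_has_vector_derivative[symmetric]
             intro: DERIV_subset[OF deriv])
  have "((\<lambda>t. cover_count P t * 1) has_integral total_length P) {\<alpha>..\<beta>}"
    using P by (intro has_integral_cover_count) (auto intro: has_integral_const_real[THEN has_integral_eq_rhs])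
  then have X: "(cover_count P has_integral total_length P) {\<alpha>..\<beta>}" by simp
  have "0 \<le> total_length P"
    using has_integral_nonneg[OF X] cover_count_nonneg by blast
  moreover have "((\<lambda>t. cover_count P t * g' t) has_integral increments g P) {\<alpha>..\<beta>}"
    using P ftc by (intro has_integral_cover_count) auto
  ultimately show ?thesis
    using fits P by (intro bathtub_principle[OF X _ _ _ fits ftc antimono]) (auto simp: cover_count_nonneg count)
qed

section \<open>Iterated pullbacks under the inverse branch of T\<close>

locale inverse_branch =
  fixes q :: nat and lam :: real
  assumes q_ge_2: "q \<ge> 2"
begin

lemma inverse_q_bounds: "0 < 1 / real q" "1 / real q \<le> 1 / 2"
  using q_ge_2 by auto

lemma complement_length_le:
  assumes "lam + 1 / real q \<le> x" "y \<le> lam + 1"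
  shows "(y - x) / (real q - 1) \<le> 1 / real q"
proof -
  have "(y - x) / (real q - 1) \<le> (1 - 1 / real q) / (real q - 1)"
    using assms q_ge_2 by (intro divide_right_mono) auto
  also have "\<dots> = 1 / real q" using q_ge_2 by (simp add: field_simps)
  finally show ?thesis .
qed

definition branch :: "real \<Rightarrow> real" where
  "branch z = lam + frac (z - real q * lam) / real q"

lemma branch_eq_iff: "branch z = w \<longleftrightarrow> real q * w - z \<in> \<int> \<and> lam \<le> w \<and> w < lam + 1 / real q"
proof -
  have q: "real q > 0" using q_ge_2 by simp
  have "branch z = w \<longleftrightarrow> frac (z - real q * lam) = real q * (w - lam)"
    using q by (auto simp: branch_def field_simps)
  also have "\<dots> \<longleftrightarrow> - (real q * w - z) \<in> \<int> \<and> 0 \<le> real q * (w - lam) \<and> real q * (w - lam) < 1"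
    unfolding frac_unique_iff by (simp add: algebra_simps)
  also have "\<dots> \<longleftrightarrow> real q * w - z \<in> \<int> \<and> lam \<le> w \<and> w < lam + 1 / real q"
    using q by (auto simp: field_simps zero_le_mult_iff simp del: minus_diff_eq
        dest: Ints_minus[of "- (real q * w - z)"] Ints_minus[of "real q * w - z"])
  finally show ?thesis .
qed

lemma branch_range: "lam \<le> branch z" "branch z < lam + 1 / real q"
  and branch_lift: "real q * branch z - z \<in> \<int>"
  using branch_eq_iff[of z "branch z"] by simp_all

lemma branch_eq_imp_diff_Ints:
  assumes "branch a = branch b"
  shows "a - b \<in> \<int>"
proof -
  have "a - b = (real q * branch b - b) - (real q * branch a - a)" using assms by simp
  then show ?thesis using branch_lift Ints_diff by metis
qed

lemma diff_Ints_less_1_imp_eq: "a - b \<in> \<int> \<Longrightarrow> \<bar>a - b\<bar> < 1 \<Longrightarrow> a = (b :: real)"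
  using Ints_nonzero_abs_less1 by fastforce

lemma funpow_branch_eq_imp_diff_Ints: "(branch ^^ n) a = (branch ^^ n) b \<Longrightarrow> a - b \<in> \<int>"
proof (induction n arbitrary: a b)
  case (Suc n)
  then have "branch a - branch b \<in> \<int>" by (simp add: funpow_Suc_right del: funpow.simps)
  moreover have "\<bar>branch a - branch b\<bar> < 1"
    using branch_range[of a] branch_range[of b] inverse_q_bounds(2) unfolding abs_less_iff by linarith
  ultimately show ?case using diff_Ints_less_1_imp_eq branch_eq_imp_diff_Ints by blast
qed simp

text \<open>The preimage of \<open>[x, y]\<close> under \<open>T\<close> inside \<open>[lam, lam + 1/q]\<close>: one interval, or two when it
  wraps around the end of the arc.\<close>

definition pullback :: "real \<Rightarrow> real \<Rightarrow> (real \<times> real) list" where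
  "pullback x y =
    (let a = branch x; b = a + (y - x) / real q in
     if b \<le> lam + 1 / real q then [(a, b)] else [(a, lam + 1 / real q), (lam, b - 1 / real q)])"

lemma pullback_cases:
  assumes "y \<le> x + 1"
  obtains a b where "pullback x y = [(a, b)]"
  | a1 b1 a2 b2 where "pullback x y = [(a1, b1), (a2, b2)]" "b2 \<le> a1"
proof (cases "branch x + (y - x) / real q \<le> lam + 1 / real q")
  case True
  then show ?thesis using that(1) by (simp add: pullback_def Let_def)
next
  case False
  have "(y - x) / real q \<le> 1 / real q" using assms q_ge_2 by (simp add: divide_right_mono)
  then show ?thesis using that(2) False by (simp add: pullback_def Let_def)
qed

lemma pullback_subset:
  assumes "x \<le> y" "y \<le> x + 1" "(u, v) \<in> set (pullback x y)"
  shows "lam \<le> u \<and> u \<le> v \<and> v \<le> lam + 1 / real q"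
proof -
  have "(y - x) / real q \<le> 1 / real q" using assms(2) q_ge_2 by (simp add: divide_right_mono)
  then show ?thesis
    using assms branch_range[of x] q_ge_2 by (auto simp: pullback_def Let_def split: if_splits)
qed

lemma pullback_ordered:
  assumes "x \<le> y" "y \<le> x + 1" "(u, v) \<in> set (pullback x y)"
  shows "u \<le> v" "v \<le> u + 1"
  using pullback_subset[OF assms] inverse_q_bounds(2) by linarith+

lemma total_length_pullback: "total_length (pullback x y) = (y - x) / real q"
  by (simp add: pullback_def Let_def)

lemma pullback_interior_in_image:
  assumes "x \<le> y" "y \<le> x + 1" "(u, v) \<in> set (pullback x y)" "u < w" "w < v"
  shows "\<exists>z. x < z \<and> z < y \<and> branch z = w"
proof -
  define a where "a = branch x"
  have q: "real q > 0" using q_ge_2 by simp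
  have w: "lam \<le> w" "w < lam + 1 / real q"
    using pullback_subset[OF assms(1-3)] assms(4,5) by auto
  have a: "a < lam + 1 / real q" "real q * a - x \<in> \<int>" using branch_range branch_lift by (simp_all add: a_def)
  define z where "z = x + real q * (w - a) + (if a < w then 0 else 1)"
  have "real q * w - z = (real q * a - x) - (if a < w then 0 else 1)"
    by (simp add: z_def algebra_simps)
  then have "real q * w - z \<in> \<int>" using a(2) by (simp add: Ints_diff)
  then have "branch z = w" using w by (simp add: branch_eq_iff)
  moreover have "x < z \<and> z < y"
  proof (cases "a < w")
    case True
    then have "w < a + (y - x) / real q"
      using assms(3,5) inverse_q_bounds(1) unfolding pullback_def Let_def a_def[symmetric]
      by (auto split: if_splits simp del: zero_less_divide_1_iff)
    then have "real q * (w - a) < y - x" using q by (simp add: field_simps)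
    moreover have "0 < real q * (w - a)" using True q by simp
    ultimately show ?thesis using True by (simp add: z_def)
  next
    case False
    then have "u = lam" "w < a + (y - x) / real q - 1 / real q"
      using assms(3-5) unfolding pullback_def Let_def a_def[symmetric] by (auto split: if_splits)
    then have "w - a < (y - x - 1) / real q" by (simp add: diff_divide_distrib)
    then have "real q * (w - a) < y - x - 1" by (simp add: pos_less_divide_eq[OF q] mult.commute)
    moreover have "a - w < 1 / real q" using w(1) a(1) by linarith
    then have "real q * (a - w) < 1" by (simp add: pos_less_divide_eq[OF q] mult.commute)
    ultimately show ?thesis using False by (simp add: z_def algebra_simps)
  qed
  ultimately show ?thesis by blast
qed

definition refine :: "(real \<times> real) list \<Rightarrow> (real \<times> real) list" where
  "refine P = concat (map (\<lambda>(u, v). pullback u v) P)"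

definition pieces :: "nat \<Rightarrow> real \<Rightarrow> real \<Rightarrow> (real \<times> real) list" where
  "pieces n x y = (refine ^^ n) [(x, y)]"

lemma pieces_0 [simp]: "pieces 0 x y = [(x, y)]"
  by (simp add: pieces_def)

lemma pieces_Suc_right: "pieces (Suc n) x y = refine (pieces n x y)"
  by (simp add: pieces_def)

lemma funpow_refine_append: "(refine ^^ n) (P @ Q) = (refine ^^ n) P @ (refine ^^ n) Q"
  by (induction n) (simp_all add: refine_def)

lemma funpow_refine_eq_concat: "(refine ^^ n) P = concat (map (\<lambda>(u, v). (refine ^^ n) [(u, v)]) P)"
proof (induction P)
  case (Cons p P)
  have "(refine ^^ n) (p # P) = (refine ^^ n) [p] @ (refine ^^ n) P"
    using funpow_refine_append[of n "[p]" P] by simp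
  with Cons.IH show ?case by (simp add: split_def)
qed (induction n, simp_all add: refine_def)

lemma pieces_Suc: "pieces (Suc n) x y = concat (map (\<lambda>(u, v). pieces n u v) (pullback x y))"
  unfolding pieces_def funpow_Suc_right o_apply
  by (subst funpow_refine_eq_concat) (simp add: refine_def)

lemma increments_refine: "increments F (refine P) = sum_list (map (\<lambda>(u, v). increments F (pullback u v)) P)"
  by (simp add: refine_def increments_concat_map split_def)

lemma mem_pieces_SucE:
  assumes "(u, v) \<in> set (pieces (Suc n) x y)"
  obtains a b where "(a, b) \<in> set (pullback x y)" "(u, v) \<in> set (pieces n a b)"
  using assms unfolding pieces_Suc by auto

lemma pieces_subset:
  assumes "x \<le> y" "y \<le> x + 1" "(u, v) \<in> set (pieces (Suc n) x y)"
  shows "lam \<le> u \<and> u \<le> v \<and> v \<le> lam + 1 / real q"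
  using assms
proof (induction n arbitrary: x y)
  case 0
  obtain a b where "(a, b) \<in> set (pullback x y)" "(u, v) \<in> set (pieces 0 a b)"
    using mem_pieces_SucE[OF "0.prems"(3)] .
  then show ?case using pullback_subset[OF "0.prems"(1,2)] by simp
next
  case (Suc n)
  obtain a b where ab: "(a, b) \<in> set (pullback x y)" "(u, v) \<in> set (pieces (Suc n) a b)"
    using mem_pieces_SucE[OF Suc.prems(3)] .
  then show ?case using Suc.IH pullback_ordered[OF Suc.prems(1,2) ab(1)] by blast
qed

lemma pieces_ordered:
  assumes "x \<le> y" "y \<le> x + 1" "(u, v) \<in> set (pieces n x y)"
  shows "u \<le> v \<and> v \<le> u + 1"
proof (cases n)
  case 0
  then show ?thesis using assms by auto
next
  case (Suc m)
  then have "lam \<le> u \<and> u \<le> v \<and> v \<le> lam + 1 / real q"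
    using pieces_subset[OF assms(1,2)] assms(3) by simp
  then show ?thesis using inverse_q_bounds(2) by linarith
qed

lemma total_length_pieces:
  assumes "x \<le> y" "y \<le> x + 1"
  shows "total_length (pieces n x y) = (y - x) / real q ^ n"
  using assms
proof (induction n arbitrary: x y)
  case (Suc n)
  have "total_length (pieces (Suc n) x y) = sum_list (map (\<lambda>(a, b). total_length (pieces n a b)) (pullback x y))"
    by (simp add: pieces_Suc increments_concat_map split_def)
  also have "\<dots> = sum_list (map (\<lambda>(a, b). b / real q ^ n - a / real q ^ n) (pullback x y))"
    by (intro arg_cong[where f = sum_list] map_cong refl)
       (use Suc.IH pullback_ordered[OF Suc.prems] in \<open>auto simp: diff_divide_distrib\<close>)
  also have "\<dots> = increments (\<lambda>t. t / real q ^ n) (pullback x y)"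
    by (simp add: increments_def)
  also have "\<dots> = total_length (pullback x y) / real q ^ n"
    by (rule increments_divide)
  finally show ?case by (simp add: total_length_pullback)
qed simp

lemma pieces_interior_in_image:
  assumes "x \<le> y" "y \<le> x + 1" "(u, v) \<in> set (pieces n x y)" "u < w" "w < v"
  shows "\<exists>z. x < z \<and> z < y \<and> (branch ^^ n) z = w"
  using assms
proof (induction n arbitrary: x y)
  case (Suc n)
  obtain a b where ab: "(a, b) \<in> set (pullback x y)" "(u, v) \<in> set (pieces n a b)"
    using mem_pieces_SucE[OF Suc.prems(3)] .
  obtain z' where z': "a < z'" "z' < b" "(branch ^^ n) z' = w"
    using Suc.IH pullback_ordered[OF Suc.prems(1,2) ab(1)] ab(2) Suc.prems(4,5) by blast
  obtain z where "x < z" "z < y" "branch z = z'"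
    using pullback_interior_in_image[OF Suc.prems(1,2) ab(1) z'(1,2)] by blast
  then show ?case using z'(3) by (auto simp: funpow_Suc_right simp del: funpow.simps)
qed auto

lemma pieces_pullback_disjoint:
  assumes xy: "x \<le> y" "y \<le> x + 1"
    and ab: "(a1, b1) \<in> set (pullback x y)" "(a2, b2) \<in> set (pullback x y)" "b2 \<le> a1"
    and "(u1, v1) \<in> set (pieces n a1 b1)" "u1 < w" "w < v1"
    and "(u2, v2) \<in> set (pieces n a2 b2)" "u2 < w" "w < v2"
  shows False
proof -
  obtain z1 where z1: "a1 < z1" "z1 < b1" "(branch ^^ n) z1 = w"
    using pieces_interior_in_image[OF pullback_ordered[OF xy ab(1)] assms(6-8)] by blast
  obtain z2 where z2: "a2 < z2" "z2 < b2" "(branch ^^ n) z2 = w"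
    using pieces_interior_in_image[OF pullback_ordered[OF xy ab(2)] assms(9-11)] by blast
  have "z1 - z2 \<in> \<int>" using z1(3) z2(3) by (intro funpow_branch_eq_imp_diff_Ints[of n]) simp
  moreover have "\<bar>z1 - z2\<bar> < 1"
    using z1 z2 pullback_subset[OF xy ab(1)] pullback_subset[OF xy ab(2)] inverse_q_bounds(2)
    unfolding abs_less_iff by linarith
  ultimately show False using diff_Ints_less_1_imp_eq z1 z2 ab(3) by fastforce
qed

lemma cover_count_pieces_le_1:
  assumes "x \<le> y" "y \<le> x + 1"
  shows "cover_count (pieces n x y) w \<le> 1"
  using assms
proof (induction n arbitrary: x y)
  case 0
  then show ?case by (simp add: cover_count_def)
next
  case (Suc n)
  have IH: "cover_count (pieces n a b) w \<le> 1" if "(a, b) \<in> set (pullback x y)" for a b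
    using Suc.IH pullback_ordered[OF Suc.prems that] by blast
  from Suc.prems(2) show ?case
  proof (cases rule: pullback_cases)
    case (1 a b)
    then show ?thesis using IH[of a b] by (simp add: pieces_Suc)
  next
    case (2 a1 b1 a2 b2)
    have in_pullback: "(a1, b1) \<in> set (pullback x y)" "(a2, b2) \<in> set (pullback x y)"
      using 2(1) by simp_all
    have "cover_count (pieces n a1 b1) w = 0 \<or> cover_count (pieces n a2 b2) w = 0"
    proof (rule ccontr)
      assume "\<not> ?thesis"
      then have "cover_count (pieces n a1 b1) w \<noteq> 0" "cover_count (pieces n a2 b2) w \<noteq> 0"
        by simp_all
      then obtain u1 v1 u2 v2 where
        "(u1, v1) \<in> set (pieces n a1 b1)" "u1 < w" "w < v1"
        "(u2, v2) \<in> set (pieces n a2 b2)" "u2 < w" "w < v2"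
        by (elim cover_count_nonzero_imp)
      then show False by (rule pieces_pullback_disjoint[OF Suc.prems in_pullback 2(2)])
    qed
    then show ?thesis
      using IH[OF in_pullback(1)] IH[OF in_pullback(2)] cover_count_nonneg 2(1)
      by (auto simp: pieces_Suc cover_count_append)
  qed
qed

text \<open>A point inside pullbacks of levels \<open>m < n\<close> would be \<open>branch\<^sup>m\<close> of two points \<open>z\<^sub>2\<close> and
  \<open>branch\<^bsup>n-m\<^esup> z\<^sub>1\<close> that differ by an integer; but the first lies in the open complementary arc
  and the second in \<open>[lam, lam + 1/q)\<close>.\<close>

lemma pieces_levels_disjoint:
  assumes xy: "lam + 1 / real q \<le> x" "x < y" "y \<le> lam + 1" and "m < n"
    and "(u1, v1) \<in> set (pieces n x y)" "u1 < w" "w < v1"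
    and "(u2, v2) \<in> set (pieces m x y)" "u2 < w" "w < v2"
  shows False
proof -
  have xy': "x \<le> y" "y \<le> x + 1" using xy inverse_q_bounds(1) by linarith+
  obtain z1 where z1: "x < z1" "z1 < y" "(branch ^^ n) z1 = w"
    using pieces_interior_in_image[OF xy' assms(5-7)] by blast
  obtain z2 where z2: "x < z2" "z2 < y" "(branch ^^ m) z2 = w"
    using pieces_interior_in_image[OF xy' assms(8-10)] by blast
  note z = z1 z2
  obtain k where k: "n = m + Suc k" using less_imp_Suc_add[OF \<open>m < n\<close>] by auto
  define s where "s = (branch ^^ Suc k) z1"
  have "(branch ^^ m) s = (branch ^^ n) z1" by (simp only: s_def k funpow_add o_apply)
  then have "(branch ^^ m) s = (branch ^^ m) z2" using z(3,6) by simp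
  then have "s - z2 \<in> \<int>" by (rule funpow_branch_eq_imp_diff_Ints)
  then have "z2 - s \<in> \<int>" by (metis Ints_minus minus_diff_eq)
  moreover have "lam \<le> s" "s < lam + 1 / real q" by (simp_all add: s_def branch_range)
  then have "\<bar>z2 - s\<bar> < 1" "z2 - s \<noteq> 0" using z(4,5) xy by linarith+
  ultimately show False using Ints_nonzero_abs_less1[of "z2 - s"] by blast
qed

lemma cover_count_levels_le_1:
  assumes "lam + 1 / real q \<le> x" "x < y" "y \<le> lam + 1"
  shows "cover_count (concat (map (\<lambda>n. pieces (Suc n) x y) [0..<N])) w \<le> 1"
proof (induction N)
  case 0
  then show ?case by (simp add: cover_count_def)
next
  case (Suc N)
  let ?old = "concat (map (\<lambda>n. pieces (Suc n) x y) [0..<N])"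
  have xy: "x \<le> y" "y \<le> x + 1" using assms inverse_q_bounds(1) by linarith+
  show ?case
  proof (cases "cover_count (pieces (Suc N) x y) w = 0")
    case True
    then show ?thesis using Suc.IH by (simp add: cover_count_append)
  next
    case False
    then obtain u v where new: "(u, v) \<in> set (pieces (Suc N) x y)" "u < w" "w < v"
      by (elim cover_count_nonzero_imp)
    have "cover_count ?old w = 0"
    proof (rule ccontr)
      assume "cover_count ?old w \<noteq> 0"
      then obtain u' v' n where "n < N" "(u', v') \<in> set (pieces (Suc n) x y)" "u' < w" "w < v'"
        by (elim cover_count_nonzero_imp) auto
      then show False using pieces_levels_disjoint[OF assms _ new] by (meson Suc_mono)
    qed
    then show ?thesis using cover_count_pieces_le_1[OF xy] by (simp add: cover_count_append)
  qed
qed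

end

section \<open>The pre-Sturmian equation with a concave coefficient\<close>

lemma geometric_tail_sums:
  assumes "q > (1 :: real)"
  shows "(\<lambda>n. d / q ^ Suc n) sums (d / (q - 1))"
proof -
  have "(\<lambda>n. d / q * (1 / q) ^ n) sums (d / q * (1 / (1 - 1 / q)))"
    using assms by (intro sums_mult geometric_sums) simp
  moreover have "d / q * (1 / (1 - 1 / q)) = d / (q - 1)"
    using assms by (simp add: field_simps)
  moreover have "(\<lambda>n. d / q * (1 / q) ^ n) = (\<lambda>n. d / q ^ Suc n)"
    by (simp add: power_one_over)
  ultimately show ?thesis by metis
qed

lemma sum_geometric_tail_le:
  assumes "q > (1 :: real)" "d \<ge> 0"
  shows "(\<Sum>n<N. d / q ^ Suc n) \<le> d / (q - 1)"
proof -
  have "(\<Sum>n<N. d / q ^ Suc n) \<le> (\<Sum>n. d / q ^ Suc n)"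
    using geometric_tail_sums[OF assms(1)] assms by (intro sum_le_suminf) (auto simp: sums_iff)
  also have "\<dots> = d / (q - 1)" using geometric_tail_sums[OF assms(1)] by (rule sums_unique[symmetric])
  finally show ?thesis .
qed

lemma le_at_geometric_limit:
  fixes F :: "real \<Rightarrow> real"
  assumes "q > 1" "isCont F (d / (q - 1))"
    and "\<And>N. a \<le> F (\<Sum>n<N. d / q ^ Suc n) + C / q ^ N"
  shows "a \<le> F (d / (q - 1))"
proof -
  have "(\<lambda>N. \<Sum>n<N. d / q ^ Suc n) \<longlonglongrightarrow> d / (q - 1)"
    using geometric_tail_sums[OF assms(1)] by (simp add: sums_def)
  moreover have "(\<lambda>N. C / q ^ N) \<longlonglongrightarrow> 0"
    using assms(1) by (intro LIMSEQ_divide_realpow_zero) auto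
  ultimately have "(\<lambda>N. F (\<Sum>n<N. d / q ^ Suc n) + C / q ^ N) \<longlonglongrightarrow> F (d / (q - 1)) + 0"
    by (intro tendsto_add isCont_tendsto_compose[OF assms(2)])
  then show ?thesis using assms(3) by (intro LIMSEQ_le_const) auto
qed

lemma periodic_add_Ints:
  fixes f :: "real \<Rightarrow> 'a"
  assumes "\<And>x. f (x + 1) = f x" "d \<in> \<int>"
  shows "f (x + d) = f x"
proof -
  obtain k where "d = of_int k" using assms(2) by (auto elim: Ints_cases)
  moreover have "f (x + of_int k) = f x" for x
  proof (induction k arbitrary: x rule: int_induct[where k = 0])
    case (step2 i)
    then show ?case using assms(1)[of "x + of_int (i - 1)"] by (simp add: add.assoc)
  qed (simp_all add: assms(1) flip: add.assoc)
  ultimately show ?thesis by simp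
qed

locale pre_sturmian = inverse_branch q lam for q lam +
  fixes \<psi> g g' :: "real \<Rightarrow> real" and \<beta> L :: real
  assumes periodic: "\<And>x. \<psi> (x + 1) = \<psi> x"
    and lipschitz: "L-lipschitz_on UNIV \<psi>"
    and cohomological_eq: "\<And>x. x \<in> {lam..lam + 1 / real q} \<Longrightarrow> \<psi> (real q * x) = \<psi> x + g x - \<beta>"
    and g_deriv: "\<And>x. x \<in> {lam..lam + 1 / real q} \<Longrightarrow> (g has_real_derivative g' x) (at x)"
    and g'_antimono: "\<And>s t. lam \<le> s \<Longrightarrow> s \<le> t \<Longrightarrow> t \<le> lam + 1 / real q \<Longrightarrow> g' t \<le> g' s"
begin

lemma periodic_Ints: "d \<in> \<int> \<Longrightarrow> \<psi> (x + d) = \<psi> x"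
  using periodic by (rule periodic_add_Ints)

lemma psi_eq_lift:
  assumes "t \<in> {lam..lam + 1 / real q}" "real q * t - w \<in> \<int>"
  shows "\<psi> w = \<psi> t + g t - \<beta>"
  using periodic_Ints[OF assms(2), of w] cohomological_eq[OF assms(1)] by simp

lemma psi_diff_eq_pullback:
  assumes "x \<le> y" "y \<le> x + 1"
  shows "\<psi> y - \<psi> x = increments g (pullback x y) + increments \<psi> (pullback x y)"
proof -
  define a where "a = branch x"
  define b where "b = a + (y - x) / real q"
  have a: "a \<in> {lam..lam + 1 / real q}" using branch_range by (simp add: a_def less_imp_le)
  have "0 \<le> (y - x) / real q" using assms(1) by simp
  have lift: "real q * b - y = real q * a - x" using q_ge_2 by (simp add: b_def field_simps)
  have "real q * a - x \<in> \<int>" using branch_lift by (simp add: a_def)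
  then have x: "\<psi> x = \<psi> a + g a - \<beta>" by (rule psi_eq_lift[OF a])
  have ends: "\<psi> lam + g lam = \<psi> (lam + 1 / real q) + g (lam + 1 / real q)"
    using psi_eq_lift[of lam "real q * lam"] psi_eq_lift[of "lam + 1 / real q" "real q * lam"]
      q_ge_2 inverse_q_bounds by (simp add: algebra_simps)
  show ?thesis
  proof (cases "b \<le> lam + 1 / real q")
    case True
    then have "\<psi> y = \<psi> b + g b - \<beta>"
      using a lift \<open>real q * a - x \<in> \<int>\<close> \<open>0 \<le> (y - x) / real q\<close>
      by (intro psi_eq_lift) (auto simp: b_def)
    then show ?thesis using x True by (simp add: pullback_def Let_def a_def[symmetric] b_def[symmetric])
  next
    case False
    have "(y - x) / real q \<le> 1 / real q" using assms(2) by (simp add: divide_right_mono)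
    then have "b - 1 / real q \<le> lam + 1 / real q" using a by (simp add: b_def)
    moreover have "real q * (b - 1 / real q) - y = (real q * a - x) - 1"
      using lift q_ge_2 by (simp add: algebra_simps)
    ultimately have "\<psi> y = \<psi> (b - 1 / real q) + g (b - 1 / real q) - \<beta>"
      using False \<open>real q * a - x \<in> \<int>\<close> by (intro psi_eq_lift) auto
    then show ?thesis using x False ends
      by (simp add: pullback_def Let_def a_def[symmetric] b_def[symmetric])
  qed
qed

lemma psi_diff_eq_levels:
  assumes "x \<le> y" "y \<le> x + 1"
  shows "\<psi> y - \<psi> x = (\<Sum>n<N. increments g (pieces (Suc n) x y)) + increments \<psi> (pieces N x y)"
proof (induction N)
  case (Suc N)
  have "increments \<psi> (pieces N x y) =
      sum_list (map (\<lambda>(u, v). increments g (pullback u v) + increments \<psi> (pullback u v)) (pieces N x y))"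
    unfolding increments_def[of \<psi> "pieces N x y"]
    by (intro arg_cong[where f = sum_list] map_cong refl)
       (use psi_diff_eq_pullback pieces_ordered[OF assms] in auto)
  also have "\<dots> = increments g (pieces (Suc N) x y) + increments \<psi> (pieces (Suc N) x y)"
    by (simp add: pieces_Suc_right increments_refine sum_list_addf split_def)
  finally show ?case using Suc.IH by simp
qed simp

lemma psi_diff_le_levels:
  assumes "x \<le> y" "y \<le> x + 1"
  shows "\<psi> y - \<psi> x \<le> (\<Sum>n<N. increments g (pieces (Suc n) x y)) + L * (y - x) / real q ^ N"
proof -
  have "\<bar>increments \<psi> (pieces N x y)\<bar> \<le> L * total_length (pieces N x y)"
    using pieces_ordered[OF assms] by (intro abs_increments_le[OF lipschitz]) auto
  then show ?thesis using psi_diff_eq_levels[OF assms, of N] total_length_pieces[OF assms, of N] by simp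
qed

lemma g_slope_le:
  assumes "lam \<le> u" "u \<le> v" "v \<le> lam + 1 / real q"
  shows "g v - g u \<le> g' lam * (v - u)"
proof (cases "u = v")
  case False
  then have "\<exists>\<xi>>u. \<xi> < v \<and> g v - g u = (v - u) * g' \<xi>"
    using assms by (intro MVT2) (auto intro: g_deriv)
  then obtain \<xi> where "u < \<xi>" "\<xi> < v" "g v - g u = (v - u) * g' \<xi>" by blast
  moreover have "g' \<xi> \<le> g' lam" using assms calculation by (intro g'_antimono) auto
  ultimately show ?thesis using assms by (simp add: mult.commute mult_left_mono)
qed simp

lemma psi_diff_le_linear:
  assumes "x \<le> y" "y \<le> x + 1"
  shows "\<psi> y - \<psi> x \<le> g' lam * ((y - x) / (real q - 1))"
proof (rule le_at_geometric_limit[where F = "\<lambda>s. g' lam * s" and C = "L * (y - x)"])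
  fix N
  have "increments g (pieces (Suc n) x y) \<le> g' lam * ((y - x) / real q ^ Suc n)" for n
  proof -
    have "increments g (pieces (Suc n) x y) \<le> increments (\<lambda>t. g' lam * t) (pieces (Suc n) x y)"
      using pieces_subset[OF assms] g_slope_le by (intro increments_mono) (simp add: right_diff_distrib)
    then show ?thesis by (simp only: increments_cmult total_length_pieces[OF assms])
  qed
  then have "(\<Sum>n<N. increments g (pieces (Suc n) x y)) \<le> g' lam * (\<Sum>n<N. (y - x) / real q ^ Suc n)"
    by (simp add: sum_distrib_left sum_mono)
  then show "\<psi> y - \<psi> x \<le> g' lam * (\<Sum>n<N. (y - x) / real q ^ Suc n) + L * (y - x) / real q ^ N"
    using psi_diff_le_levels[OF assms, of N] by simp
qed (use q_ge_2 in auto)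

lemma psi_diff_le_complement_levels:
  assumes xy: "lam + 1 / real q \<le> x" "x < y" "y \<le> lam + 1"
  shows "\<psi> y - \<psi> x \<le> g (lam + (\<Sum>n<N. (y - x) / real q ^ Suc n)) - g lam + L * (y - x) / real q ^ N"
proof -
  have xy': "x \<le> y" "y \<le> x + 1" using xy inverse_q_bounds(1) by linarith+
  define P where "P = concat (map (\<lambda>n. pieces (Suc n) x y) [0..<N])"
  have len: "total_length P = (\<Sum>n<N. (y - x) / real q ^ Suc n)"
    by (simp add: P_def increments_concat_map sum_list_upt_eq_sum total_length_pieces[OF xy'])
  also have "\<dots> \<le> (y - x) / (real q - 1)"
    using q_ge_2 xy by (intro sum_geometric_tail_le) auto
  also have "\<dots> \<le> 1 / real q" using complement_length_le xy by simp
  finally have "increments g P \<le> g (lam + total_length P) - g lam"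
    using pieces_subset[OF xy'] cover_count_levels_le_1[OF xy]
    by (intro increments_le_initial_segment[where g' = g'])
       (auto simp: P_def intro: g_deriv[THEN has_field_derivative_at_within] g'_antimono)
  then show ?thesis
    using psi_diff_le_levels[OF xy', of N] len by (simp add: P_def increments_concat_map sum_list_upt_eq_sum)
qed

lemma psi_diff_le_complement:
  assumes xy: "lam + 1 / real q \<le> x" "x < y" "y \<le> lam + 1"
  shows "\<psi> y - \<psi> x \<le> g (lam + (y - x) / (real q - 1)) - g lam"
proof (rule le_at_geometric_limit[where F = "\<lambda>s. g (lam + s) - g lam" and C = "L * (y - x)"])
  have "0 \<le> (y - x) / (real q - 1)" "(y - x) / (real q - 1) \<le> 1 / real q"
    using xy q_ge_2 complement_length_le by simp_all
  then have "isCont g (lam + (y - x) / (real q - 1))"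
    using g_deriv[of "lam + (y - x) / (real q - 1)"] DERIV_isCont by auto
  then have "isCont (\<lambda>s. g (lam + s)) ((y - x) / (real q - 1))"
    by (rule isCont_o2[rotated]) simp
  then show "isCont (\<lambda>s. g (lam + s) - g lam) ((y - x) / (real q - 1))"
    by (intro continuous_intros)
qed (use q_ge_2 psi_diff_le_complement_levels[OF xy] in auto)

lemma psi_diff_le:
  assumes "x \<le> y" "y \<le> x + 1"
  shows "\<psi> y - \<psi> x \<le> g (lam + (y - x) / real q) - g lam + g' lam * ((y - x) / (real q * (real q - 1)))"
proof -
  have "(y - x) / real q \<le> 1 / real q" using assms(2) by (simp add: divide_right_mono)
  then have "increments g (pullback x y) \<le> g (lam + total_length (pullback x y)) - g lam"
    using pullback_subset[OF assms] cover_count_pieces_le_1[OF assms, of "Suc 0"]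
    by (intro increments_le_initial_segment[where g' = g'])
       (auto simp: total_length_pullback pieces_Suc_right refine_def
        intro: g_deriv[THEN has_field_derivative_at_within] g'_antimono)
  then have "increments g (pullback x y) \<le> g (lam + (y - x) / real q) - g lam"
    by (simp add: total_length_pullback)
  moreover have "increments \<psi> (pullback x y) \<le> increments (\<lambda>t. g' lam * (t / (real q - 1))) (pullback x y)"
    using psi_diff_le_linear pullback_ordered[OF assms]
    by (intro increments_mono) (simp add: diff_divide_distrib[symmetric] right_diff_distrib[symmetric])
  moreover have "increments (\<lambda>t. g' lam * (t / (real q - 1))) (pullback x y)
      = g' lam * ((y - x) / (real q * (real q - 1)))"
    by (simp add: increments_cmult increments_divide total_length_pullback)
  ultimately show ?thesis using psi_diff_eq_pullback[OF assms] by simp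
qed

text \<open>The primed estimates are the unprimed ones for the reflected data.\<close>

lemma reflect:
  "pre_sturmian q (- lam - 1 / real q) (\<lambda>x. \<psi> (- x)) (\<lambda>x. g (- x)) (\<lambda>x. - g' (- x)) \<beta> L"
proof unfold_locales
  show "\<psi> (- (x + 1)) = \<psi> (- x)" for x using periodic[of "- x - 1"] by simp
  show "L-lipschitz_on UNIV (\<lambda>x. \<psi> (- x))"
  proof (rule lipschitz_onI)
    show "dist (\<psi> (- a)) (\<psi> (- b)) \<le> L * dist a b" for a b
      using lipschitz_onD[OF lipschitz, of "- a" "- b"] by (simp add: dist_minus)
  qed (rule lipschitz_on_nonneg[OF lipschitz])
  fix x assume x: "x \<in> {- lam - 1 / real q..- lam - 1 / real q + 1 / real q}"
  then show "\<psi> (- (real q * x)) = \<psi> (- x) + g (- x) - \<beta>"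
    using cohomological_eq[of "- x"] by auto
  show "((\<lambda>x. g (- x)) has_real_derivative - g' (- x)) (at x)"
    using x g_deriv[of "- x"] by (auto simp: DERIV_mirror[symmetric])
next
  fix s t assume "- lam - 1 / real q \<le> s" "s \<le> t" "t \<le> - lam - 1 / real q + 1 / real q"
  then show "- g' (- t) \<le> - g' (- s)" using g'_antimono[of "- t" "- s"] by auto
qed

lemma psi_diff_le_complement':
  assumes "lam + 1 / real q - 1 \<le> y" "y < x" "x \<le> lam"
  shows "\<psi> y - \<psi> x \<le> g (lam + 1 / real q - (x - y) / (real q - 1)) - g (lam + 1 / real q)"
proof -
  have "- y - - x = x - y" "- (- lam - 1 / real q) = lam + 1 / real q"
    "- (- lam - 1 / real q + (x - y) / (real q - 1)) = lam + 1 / real q - (x - y) / (real q - 1)"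
    by simp_all
  then show ?thesis
    using pre_sturmian.psi_diff_le_complement[OF reflect, of "- x" "- y"] assms
    by (simp only: minus_minus)
qed

lemma psi_diff_le':
  assumes "y \<le> x" "x \<le> y + 1"
  shows "\<psi> y - \<psi> x \<le> g (lam + 1 / real q - (x - y) / real q) - g (lam + 1 / real q)
    - g' (lam + 1 / real q) * ((x - y) / (real q * (real q - 1)))"
proof -
  have "- y - - x = x - y" "- (- lam - 1 / real q) = lam + 1 / real q"
    "- (- lam - 1 / real q + (x - y) / real q) = lam + 1 / real q - (x - y) / real q"
    by simp_all
  then show ?thesis
    using pre_sturmian.psi_diff_le[OF reflect, of "- x" "- y"] assms
    by (simp only: minus_minus mult_minus_left add_uminus_conv_diff)
qed

end

section \<open>The kernel case\<close>

lemma pre_sturmian_with_imp_pre_sturmian: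
  assumes "q \<ge> 2" "- 1 / real q - c < lam" "lam < - c" "pre_sturmian_with q c lam \<psi> \<beta>"
  obtains L where "pre_sturmian q lam \<psi> (fc q c) (\<lambda>t. df0 q (t + c)) \<beta> L"
proof -
  obtain L where periodic: "\<And>x. \<psi> (x + 1) = \<psi> x" and lipschitz: "L-lipschitz_on UNIV \<psi>"
    and eq: "\<And>x. x \<in> Carc q lam \<Longrightarrow> fc q c x + \<psi> x - \<psi> (Tmap q x) = \<beta>"
    using assms(4) unfolding pre_sturmian_with_def by blast
  have q: "q \<ge> 1" using assms(1) by simp
  have arc: "\<bar>t + c\<bar> < 1 / real q" if "t \<in> {lam..lam + 1 / real q}" for t
    using that assms(2,3) by (auto simp: abs_less_iff)
  have "pre_sturmian q lam \<psi> (fc q c) (\<lambda>t. df0 q (t + c)) \<beta> L"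
  proof unfold_locales
    fix x assume x: "x \<in> {lam..lam + 1 / real q}"
    then have "x \<in> Carc q lam" unfolding Carc_def by (intro CollectI exI[of _ 0]) simp
    moreover have "\<psi> (Tmap q x) = \<psi> (real q * x)"
      using periodic_add_Ints[of \<psi> "- of_int \<lfloor>real q * x\<rfloor>" "real q * x"] periodic
      by (simp add: Tmap_def frac_def)
    ultimately show "\<psi> (real q * x) = \<psi> x + fc q c x - \<beta>" using eq by fastforce
    have "((\<lambda>t. f0 q (t + c)) has_real_derivative df0 q (x + c) * 1) (at x)"
      by (rule DERIV_chain2[where f = "f0 q" and g = "\<lambda>t. t + c"])
         (auto intro!: derivative_eq_intros has_real_derivative_f0[OF q arc[OF x]])
    then show "(fc q c has_real_derivative df0 q (x + c)) (at x)"
      by (simp add: fc_def[abs_def])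
  next
    fix s t assume "lam \<le> s" "s \<le> t" "t \<le> lam + 1 / real q"
    then show "df0 q (t + c) \<le> df0 q (s + c)"
      using df0_antimono[OF q] arc[of s] arc[of t] by (simp add: abs_less_iff)
  qed (use assms(1) periodic lipschitz in auto)
  then show ?thesis using that by blast
qed

locale pre_sturmian_fc = pre_sturmian q lam \<psi> "fc q c" "\<lambda>t. df0 q (t + c)" \<beta> L
  for q lam \<psi> c \<beta> L +
  fixes \<theta> :: real
  assumes theta_def: "\<theta> = lam + 1 / real q + c"
    and lam_range: "- 1 / real q - c < lam" "lam < - c"
begin

lemma q_ge_1: "q \<ge> 1" using q_ge_2 by simp

lemma theta_range: "0 < \<theta>" "\<theta> < 1 / real q"
  using lam_range by (simp_all add: theta_def)

lemma fc_left: "fc q c (lam + t) = f0 q (1 / real q - \<theta> - t)"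
  using f0_minus[of q "1 / real q - \<theta> - t"] by (simp add: fc_def theta_def algebra_simps)

lemma fc_right: "fc q c (lam + 1 / real q - t) = f0 q (\<theta> - t)"
  by (simp add: fc_def theta_def algebra_simps)

lemma deriv_f0_theta: "deriv (f0 q) \<theta> = df0 q \<theta>" "deriv (f0 q) (1 / real q - \<theta>) = df0 q (1 / real q - \<theta>)"
  using theta_range by (auto intro!: DERIV_imp_deriv has_real_derivative_f0[OF q_ge_1])

lemma estimate_complement:
  assumes "lam + 1 / real q \<le> x \<and> x < y \<and> y \<le> lam + 1"
  shows "\<psi> y - \<psi> x \<le> f0 q (1 / real q - \<theta> - (y - x) / (real q - 1)) - f0 q (1 / real q - \<theta>)
    \<and> f0 q (1 / real q - \<theta> - (y - x) / (real q - 1)) - f0 q (1 / real q - \<theta>)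
        \<le> f0 q 0 - f0 q (1 / real q - \<theta>)" (is "_ \<le> ?D \<and> _")
proof
  show "\<psi> y - \<psi> x \<le> ?D"
    using psi_diff_le_complement assms fc_left[of 0] by (simp add: fc_left)
  have "0 < (y - x) / (real q - 1)" "(y - x) / (real q - 1) \<le> 1 / real q"
    using assms q_ge_2 complement_length_le by auto
  then show "?D \<le> f0 q 0 - f0 q (1 / real q - \<theta>)"
    using f0_le_f0_0[OF q_ge_1] theta_range by (simp add: abs_less_iff)
qed

lemma estimate_complement':
  assumes "lam + 1 / real q - 1 \<le> y \<and> y < x \<and> x \<le> lam"
  shows "\<psi> y - \<psi> x \<le> f0 q (\<theta> - (x - y) / (real q - 1)) - f0 q \<theta>
    \<and> f0 q (\<theta> - (x - y) / (real q - 1)) - f0 q \<theta> \<le> f0 q 0 - f0 q \<theta>" (is "_ \<le> ?D \<and> _")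
proof
  show "\<psi> y - \<psi> x \<le> ?D"
    using psi_diff_le_complement' assms fc_right[of 0] by (simp add: fc_right)
  have "0 < (x - y) / (real q - 1)" "(x - y) / (real q - 1) \<le> 1 / real q"
    using assms q_ge_2 complement_length_le[of "y + 1" "x + 1"] by auto
  then show "?D \<le> f0 q 0 - f0 q \<theta>"
    using f0_le_f0_0[OF q_ge_1] theta_range by (simp add: abs_less_iff)
qed

lemma estimate_increment:
  assumes "x < y \<and> y - x < 1"
  shows "\<psi> y - \<psi> x \<le> f0 q (1 / real q - \<theta> - (y - x) / real q) - f0 q (1 / real q - \<theta>)
      - deriv (f0 q) (1 / real q - \<theta>) * ((y - x) / (real q * (real q - 1)))
    \<and> f0 q (1 / real q - \<theta> - (y - x) / real q) - f0 q (1 / real q - \<theta>)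
      - deriv (f0 q) (1 / real q - \<theta>) * ((y - x) / (real q * (real q - 1)))
        \<le> - deriv (f0 q) (1 / real q - \<theta>) * ((y - x) / (real q - 1))"
    (is "_ \<le> ?F (1 / real q - \<theta> - ?h) - ?F (1 / real q - \<theta>) - ?D * ?m \<and> _")
proof
  have "df0 q (lam + c) = - df0 q (1 / real q - \<theta>)"
    using df0_minus[of q "1 / real q - \<theta>"] by (simp add: theta_def add.commute)
  then show "\<psi> y - \<psi> x \<le> ?F (1 / real q - \<theta> - ?h) - ?F (1 / real q - \<theta>) - ?D * ?m"
    using psi_diff_le[of x y] assms fc_left[of 0] by (simp add: fc_left deriv_f0_theta)
  have "0 < ?h" "?h < 1 / real q"
    using assms q_ge_2 by (auto simp: divide_strict_right_mono)
  then have tangent: "?F (1 / real q - \<theta> - ?h) - ?F (1 / real q - \<theta>) \<le> ?D * (- ?h)"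
    using f0_le_tangent[OF q_ge_1, of "1 / real q - \<theta> - ?h" "1 / real q - \<theta>"] theta_range
    by (simp add: abs_less_iff deriv_f0_theta)
  have "(y - x) / (real q - 1) = ?h + ?m"
    using q_ge_2 by (simp add: field_simps)
  then have "- ?D * ((y - x) / (real q - 1)) = ?D * (- ?h) - ?D * ?m"
    by (simp add: distrib_left)
  with tangent show "?F (1 / real q - \<theta> - ?h) - ?F (1 / real q - \<theta>) - ?D * ?m
      \<le> - ?D * ((y - x) / (real q - 1))"
    by linarith
qed

lemma estimate_increment':
  assumes "y < x \<and> x - y < 1"
  shows "\<psi> y - \<psi> x \<le> f0 q (\<theta> - (x - y) / real q) - f0 q \<theta>
      - deriv (f0 q) \<theta> * ((x - y) / (real q * (real q - 1)))
    \<and> f0 q (\<theta> - (x - y) / real q) - f0 q \<theta> - deriv (f0 q) \<theta> * ((x - y) / (real q * (real q - 1)))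
        \<le> - deriv (f0 q) \<theta> * ((x - y) / (real q - 1))"
    (is "_ \<le> ?F (\<theta> - ?h) - ?F \<theta> - ?D * ?m \<and> _")
proof
  show "\<psi> y - \<psi> x \<le> ?F (\<theta> - ?h) - ?F \<theta> - ?D * ?m"
    using psi_diff_le'[of y x] assms fc_right[of 0] deriv_f0_theta(1)
    by (simp add: fc_right theta_def)
  have "0 < ?h" "?h < 1 / real q"
    using assms q_ge_2 by (auto simp: divide_strict_right_mono)
  then have tangent: "?F (\<theta> - ?h) - ?F \<theta> \<le> ?D * (- ?h)"
    using f0_le_tangent[OF q_ge_1, of "\<theta> - ?h" \<theta>] theta_range
    by (simp add: abs_less_iff deriv_f0_theta)
  have "(x - y) / (real q - 1) = ?h + ?m"
    using q_ge_2 by (simp add: field_simps)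
  then have "- ?D * ((x - y) / (real q - 1)) = ?D * (- ?h) - ?D * ?m"
    by (simp add: distrib_left)
  with tangent show "?F (\<theta> - ?h) - ?F \<theta> - ?D * ?m \<le> - ?D * ((x - y) / (real q - 1))"
    by linarith
qed

end

theorem lemma5p4:
  fixes q :: nat and c lam \<beta> :: real and \<psi> :: "real \<Rightarrow> real"
  assumes hq: "q \<ge> 2"
    and hlam: "- 1 / real q - c < lam" "lam < - c"
    and hS: "pre_sturmian_with q c lam \<psi> \<beta>"
  defines "\<theta> \<equiv> lam + 1 / real q + c"
    and "f \<equiv> f0 q"
  shows
   "(\<forall>x y. lam + 1 / real q \<le> x \<and> x < y \<and> y \<le> lam + 1 \<longrightarrow>
       \<psi> y - \<psi> x \<le> f (1 / real q - \<theta> - (y - x) / (real q - 1)) - f (1 / real q - \<theta>)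
     \<and> f (1 / real q - \<theta> - (y - x) / (real q - 1)) - f (1 / real q - \<theta>)
          \<le> f 0 - f (1 / real q - \<theta>))
  \<and> (\<forall>x y. lam + 1 / real q - 1 \<le> y \<and> y < x \<and> x \<le> lam \<longrightarrow>
       \<psi> y - \<psi> x \<le> f (\<theta> - (x - y) / (real q - 1)) - f \<theta>
     \<and> f (\<theta> - (x - y) / (real q - 1)) - f \<theta> \<le> f 0 - f \<theta>)
  \<and> (\<forall>x y. x < y \<and> y - x < 1 \<longrightarrow>
       \<psi> y - \<psi> x \<le> f (1 / real q - \<theta> - (y - x) / real q) - f (1 / real q - \<theta>)
            - deriv f (1 / real q - \<theta>) * ((y - x) / (real q * (real q - 1)))
     \<and> f (1 / real q - \<theta> - (y - x) / real q) - f (1 / real q - \<theta>)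
            - deriv f (1 / real q - \<theta>) * ((y - x) / (real q * (real q - 1)))
          \<le> - deriv f (1 / real q - \<theta>) * ((y - x) / (real q - 1)))
  \<and> (\<forall>x y. y < x \<and> x - y < 1 \<longrightarrow>
       \<psi> y - \<psi> x \<le> f (\<theta> - (x - y) / real q) - f \<theta>
            - deriv f \<theta> * ((x - y) / (real q * (real q - 1)))
     \<and> f (\<theta> - (x - y) / real q) - f \<theta> - deriv f \<theta> * ((x - y) / (real q * (real q - 1)))
          \<le> - deriv f \<theta> * ((x - y) / (real q - 1)))"
proof -
  obtain L where "pre_sturmian q lam \<psi> (fc q c) (\<lambda>t. df0 q (t + c)) \<beta> L"
    using pre_sturmian_with_imp_pre_sturmian[OF hq hlam hS] .
  then interpret pre_sturmian_fc q lam \<psi> c \<beta> L \<theta>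
    by (rule pre_sturmian_fc.intro) (use hlam in \<open>simp add: pre_sturmian_fc_axioms_def \<theta>_def\<close>)
  show ?thesis
    unfolding f_def using estimate_complement estimate_complement' estimate_increment estimate_increment' by blast
qed

end
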